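(* If $\Gamma_G$ is population monotonic, then $G$ has no induced subgraph isomorphic to the co-banner graph.
   Context: $G=(V,E;w)$ is a finite simple graph with edge weights $w:E\to\mathbb{R}$, $w_e>0$ for all $e\in E$. The matching game on $G$ is the cooperative game $\Gamma_G=(N,\gamma)$ with player set $N=V$ and, for $S\subseteq N$, $\gamma(S)$ equal to the maximum weight of a matching in the induced subgraph $G[S]$ (so $\gamma(\emptyset)=0$). A population monotonic allocation scheme (PMAS) is a family $(\boldsymbol{x}_S)_{\emptyset\neq S\subseteq N}$ with $\boldsymbol{x}_S=(x_{S,i})_{i\in S}\in\mathbb{R}^S$ such that (efficiency) $\sum_{i\in S}x_{S,i}=\gamma(S)$ for every nonempty $S\subseteq N$, and (monotonicity) $x_{S,i}\le x_{T,i}$ whenever $\emptyset\ne S\subseteq T\subseteq N$ and $i\in S$. $\Gamma_G$ is called population monotonic if it admits a PMAS. The co-banner graph is the graph on vertices $\{1,2,3,4,5\}$ with edge set exactly $\{12,23,34,35,45\}$ (a triangle $345$ with a pendant path $3$–$2$–$1$). *)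

theory Defs
  imports Complex_Main
begin

definition simple_graph :: "'a set \<Rightarrow> 'a set set \<Rightarrow> bool" where
  "simple_graph V E \<longleftrightarrow> finite V \<and> (\<forall>e\<in>E. \<exists>u v. u \<in> V \<and> v \<in> V \<and> u \<noteq> v \<and> e = {u, v})"

definition matching_in :: "'a set set \<Rightarrow> 'a set \<Rightarrow> 'a set set \<Rightarrow> bool" where
  "matching_in E S M \<longleftrightarrow> M \<subseteq> E \<and> (\<forall>e\<in>M. e \<subseteq> S) \<and>
     (\<forall>e1\<in>M. \<forall>e2\<in>M. e1 \<noteq> e2 \<longrightarrow> e1 \<inter> e2 = {})"

definition matching_game :: "'a set set \<Rightarrow> ('a set \<Rightarrow> real) \<Rightarrow> 'a set \<Rightarrow> real" where
  "matching_game E w S = Max ((\<lambda>M. \<Sum>e\<in>M. w e) ` {M. matching_in E S M})"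

definition is_PMAS :: "'a set \<Rightarrow> ('a set \<Rightarrow> real) \<Rightarrow> ('a set \<Rightarrow> 'a \<Rightarrow> real) \<Rightarrow> bool" where
  "is_PMAS N v x \<longleftrightarrow>
     (\<forall>S. S \<subseteq> N \<and> S \<noteq> {} \<longrightarrow> (\<Sum>i\<in>S. x S i) = v S) \<and>
     (\<forall>S T i. S \<noteq> {} \<and> S \<subseteq> T \<and> T \<subseteq> N \<and> i \<in> S \<longrightarrow> x S i \<le> x T i)"

definition population_monotonic :: "'a set \<Rightarrow> ('a set \<Rightarrow> real) \<Rightarrow> bool" where
  "population_monotonic N v \<longleftrightarrow> (\<exists>x. is_PMAS N v x)"

definition cobanner_edges :: "nat set set" where
  "cobanner_edges = {{1,2},{2,3},{3,4},{3,5},{4,5}}"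

definition has_induced_cobanner :: "'a set \<Rightarrow> 'a set set \<Rightarrow> bool" where
  "has_induced_cobanner V E \<longleftrightarrow> (\<exists>f :: nat \<Rightarrow> 'a.
     inj_on f {1..5} \<and> f ` {1..5} \<subseteq> V \<and>
     (\<forall>i\<in>{1..5}. \<forall>j\<in>{1..5}. i \<noteq> j \<longrightarrow> ({f i, f j} \<in> E \<longleftrightarrow> {i, j} \<in> cobanner_edges)))"

end

theory Submission
  imports Defs
begin

text \<open>
  Let the co-banner edges 12, 23, 34, 35, 45 have weights a, b, c, d, e and let x be a PMAS.
  In each of the coalitions 123, 234, 235 and 1345 any two edges meet, so a maximum matching is
  a single edge and the coalition is worth its heaviest edge.
  If b \<le> c, the coalition 234 is worth c, which players 3 and 4 already claim from the edge 34,
  so player 2 gets nothing in 23; then player 3 gets b in 23, hence in 123, where players 1 and 2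
  already claim a, exceeding the value max a b. So b > c, and likewise b > d. Now 234 is worth b,
  which players 2 and 3 already claim from 23; so player 4 gets nothing in 34, i.e. player 3 gets
  c there, and likewise d in 35. In 1345, worth max c d e, player 1 gets at least its stand-alone
  value 0, player 3 at least max c d and players 4 and 5 together at least e: too much.
\<close>

lemma finite_matchings:
  assumes "finite S"
  shows "finite {M. matching_in E S M}"
proof -
  have "{M. matching_in E S M} \<subseteq> Pow (Pow S)"
    unfolding matching_in_def by auto
  then show ?thesis
    using assms by (meson finite_Pow_iff finite_subset)
qed

lemma matching_game_ge:
  assumes "finite S" "matching_in E S M"
  shows "(\<Sum>e\<in>M. w e) \<le> matching_game E w S"
  unfolding matching_game_def
  using assms finite_matchings[OF assms(1)] by (intro Max_ge) auto

lemma matching_game_nonneg: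
  assumes "finite S"
  shows "0 \<le> matching_game E w S"
  using matching_game_ge[OF assms, of E "{}" w] by (simp add: matching_in_def)

lemma matching_game_ge_weight:
  assumes "finite S" "e \<in> E" "e \<subseteq> S"
  shows "w e \<le> matching_game E w S"
  using matching_game_ge[OF assms(1), of E "{e}" w] assms by (simp add: matching_in_def)

lemma matching_le_one_if_edges_intersect:
  assumes "matching_in E S M"
    and "\<forall>e1\<in>E. \<forall>e2\<in>E. e1 \<subseteq> S \<longrightarrow> e2 \<subseteq> S \<longrightarrow> e1 \<inter> e2 \<noteq> {}"
  shows "M = {} \<or> (\<exists>e\<in>E. e \<subseteq> S \<and> M = {e})"
proof (cases "M = {}")
  case False
  then obtain e where e: "e \<in> M"
    by blast
  have "e' = e" if e': "e' \<in> M" for e'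
  proof (rule ccontr)
    assume "e' \<noteq> e"
    then have "e' \<inter> e = {}"
      using assms(1) e e' unfolding matching_in_def by blast
    moreover have "e' \<in> E" "e \<in> E" "e' \<subseteq> S" "e \<subseteq> S"
      using assms(1) e e' unfolding matching_in_def by blast+
    ultimately show False
      using assms(2) by blast
  qed
  then have "M = {e}"
    using e by blast
  moreover have "e \<in> E" "e \<subseteq> S"
    using assms(1) e unfolding matching_in_def by blast+
  ultimately show ?thesis
    by blast
qed simp

lemma matching_game_le_if_edges_intersect:
  assumes "finite S" "0 \<le> B"
    and "\<forall>e\<in>E. e \<subseteq> S \<longrightarrow> w e \<le> B"
    and "\<forall>e1\<in>E. \<forall>e2\<in>E. e1 \<subseteq> S \<longrightarrow> e2 \<subseteq> S \<longrightarrow> e1 \<inter> e2 \<noteq> {}"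
  shows "matching_game E w S \<le> B"
  unfolding matching_game_def
proof (rule Max.boundedI)
  show "finite ((\<lambda>M. \<Sum>e\<in>M. w e) ` {M. matching_in E S M})"
    using finite_matchings[OF assms(1)] by blast
  have "matching_in E S {}"
    by (simp add: matching_in_def)
  then show "(\<lambda>M. \<Sum>e\<in>M. w e) ` {M. matching_in E S M} \<noteq> {}"
    by blast
next
  fix y
  assume "y \<in> (\<lambda>M. \<Sum>e\<in>M. w e) ` {M. matching_in E S M}"
  then obtain M where "matching_in E S M" and y: "y = (\<Sum>e\<in>M. w e)"
    by blast
  from matching_le_one_if_edges_intersect[OF this(1) assms(4)] show "y \<le> B"
  proof
    assume "M = {}"
    then show ?thesis
      using y assms(2) by simp
  next
    assume "\<exists>e\<in>E. e \<subseteq> S \<and> M = {e}"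
    then show ?thesis
      using y assms(3) by auto
  qed
qed

definition induced_embedding :: "'a set set \<Rightarrow> 'b set set \<Rightarrow> 'b set \<Rightarrow> ('b \<Rightarrow> 'a) \<Rightarrow> bool" where
  "induced_embedding E F A f \<longleftrightarrow>
     inj_on f A \<and> (\<forall>i\<in>A. \<forall>j\<in>A. i \<noteq> j \<longrightarrow> ({f i, f j} \<in> E \<longleftrightarrow> {i, j} \<in> F))"

lemma has_induced_cobanner_iff:
  "has_induced_cobanner V E \<longleftrightarrow>
     (\<exists>f. induced_embedding E cobanner_edges {1..5} f \<and> f ` {1..5} \<subseteq> V)"
  unfolding has_induced_cobanner_def induced_embedding_def by blast

lemma simple_graph_cobanner: "simple_graph {1..5} cobanner_edges"
proof -
  have pair: "\<exists>u v. u \<in> {1..5} \<and> v \<in> {1..5} \<and> u \<noteq> v \<and> {i, j} = {u, v}"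
    if "i \<in> {1..5}" "j \<in> {1..5}" "i \<noteq> j" for i j :: nat
    using that by blast
  have "\<forall>e\<in>cobanner_edges. \<exists>u v. u \<in> {1..5} \<and> v \<in> {1..5} \<and> u \<noteq> v \<and> e = {u, v}"
    unfolding cobanner_edges_def by (intro ballI, elim insertE emptyE; hypsubst, rule pair; simp)
  then show ?thesis
    unfolding simple_graph_def by simp
qed

lemma induced_embedding_edge_image:
  assumes "induced_embedding E F A f" "simple_graph A F" "p \<in> F"
  shows "f ` p \<in> E"
proof -
  obtain i j where "i \<in> A" "j \<in> A" "i \<noteq> j" and p: "p = {i, j}"
    using assms(2,3) unfolding simple_graph_def by blast
  with assms(1,3) have "{f i, f j} \<in> E"
    unfolding induced_embedding_def by blast
  then show ?thesis
    by (simp add: p)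
qed

lemma induced_embedding_edge_preimage:
  assumes "simple_graph V E" "induced_embedding E F A f" "I \<subseteq> A" "e \<in> E" "e \<subseteq> f ` I"
  shows "\<exists>p\<in>F. p \<subseteq> I \<and> e = f ` p"
proof -
  obtain u v where "u \<noteq> v" and e: "e = {u, v}"
    using assms(1,4) unfolding simple_graph_def by blast
  moreover have "u \<in> f ` I" "v \<in> f ` I"
    using assms(5) e by auto
  ultimately obtain i j where ij: "i \<in> I" "j \<in> I" "i \<noteq> j" and e_ij: "e = f ` {i, j}"
    by auto
  have "i \<in> A" "j \<in> A" "{f i, f j} \<in> E"
    using assms(3,4) ij e_ij by auto
  with \<open>i \<noteq> j\<close> assms(2) have "{i, j} \<in> F"
    unfolding induced_embedding_def by simp
  moreover have "{i, j} \<subseteq> I"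
    using ij by simp
  ultimately show ?thesis
    using e_ij by blast
qed

lemma matching_game_induced_le:
  assumes "simple_graph V E" "induced_embedding E F A f" "finite I" "I \<subseteq> A" "0 \<le> B"
    and weights: "\<forall>p\<in>F. p \<subseteq> I \<longrightarrow> w (f ` p) \<le> B"
    and intersect: "\<forall>p\<in>F. \<forall>q\<in>F. p \<subseteq> I \<longrightarrow> q \<subseteq> I \<longrightarrow> p \<inter> q \<noteq> {}"
  shows "matching_game E w (f ` I) \<le> B"
proof (rule matching_game_le_if_edges_intersect)
  have inj: "inj_on f A"
    using assms(2) unfolding induced_embedding_def by blast
  have preimage: "\<exists>p\<in>F. p \<subseteq> I \<and> e = f ` p" if "e \<in> E" "e \<subseteq> f ` I" for e
    using induced_embedding_edge_preimage[OF assms(1,2,4) that] .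
  show "\<forall>e\<in>E. e \<subseteq> f ` I \<longrightarrow> w e \<le> B"
  proof (intro ballI impI)
    fix e
    assume "e \<in> E" "e \<subseteq> f ` I"
    with preimage obtain p where "p \<in> F" "p \<subseteq> I" "e = f ` p"
      by blast
    with weights show "w e \<le> B"
      by blast
  qed
  show "\<forall>e1\<in>E. \<forall>e2\<in>E. e1 \<subseteq> f ` I \<longrightarrow> e2 \<subseteq> f ` I \<longrightarrow> e1 \<inter> e2 \<noteq> {}"
  proof (intro ballI impI)
    fix e1 e2
    assume "e1 \<in> E" "e2 \<in> E" "e1 \<subseteq> f ` I" "e2 \<subseteq> f ` I"
    then obtain p q where pq: "p \<in> F" "q \<in> F" "p \<subseteq> I" "q \<subseteq> I" and "e1 = f ` p" "e2 = f ` q"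
      using preimage by metis
    then have "e1 \<inter> e2 = f ` (p \<inter> q)"
      using inj_on_image_Int[OF inj] assms(4) by auto
    moreover have "p \<inter> q \<noteq> {}"
      using intersect pq by blast
    ultimately show "e1 \<inter> e2 \<noteq> {}"
      by simp
  qed
qed (use assms(3,5) in simp_all)

lemma is_PMAS_sum:
  assumes "is_PMAS N v x" "S \<subseteq> N" "S \<noteq> {}"
  shows "(\<Sum>i\<in>S. x S i) = v S"
  using assms unfolding is_PMAS_def by blast

lemma is_PMAS_mono:
  assumes "is_PMAS N v x" "S \<subseteq> T" "T \<subseteq> N" "i \<in> S"
  shows "x S i \<le> x T i"
  using assms unfolding is_PMAS_def by blast

lemma population_monotonic_restrict:
  assumes "population_monotonic N v" "inj_on f M" "f ` M \<subseteq> N"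
  shows "population_monotonic M (\<lambda>I. v (f ` I))"
proof -
  obtain x where x: "is_PMAS N v x"
    using assms(1) unfolding population_monotonic_def by blast
  have "is_PMAS M (\<lambda>I. v (f ` I)) (\<lambda>I i. x (f ` I) (f i))"
    unfolding is_PMAS_def
  proof (intro conjI allI impI)
    fix I
    assume I: "I \<subseteq> M \<and> I \<noteq> {}"
    then have "inj_on f I"
      using assms(2) inj_on_subset by blast
    then have "(\<Sum>i\<in>I. x (f ` I) (f i)) = (\<Sum>j\<in>f ` I. x (f ` I) j)"
      by (simp add: sum.reindex)
    also have "\<dots> = v (f ` I)"
      using I assms(3) by (intro is_PMAS_sum[OF x]) auto
    finally show "(\<Sum>i\<in>I. x (f ` I) (f i)) = v (f ` I)" .
  next
    fix I J i
    assume "I \<noteq> {} \<and> I \<subseteq> J \<and> J \<subseteq> M \<and> i \<in> I"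
    then show "x (f ` I) (f i) \<le> x (f ` J) (f i)"
      using assms(3) by (intro is_PMAS_mono[OF x]) auto
  qed
  then show ?thesis
    unfolding population_monotonic_def by blast
qed

lemma cobanner_PMAS_triangle_edge_share:
  fixes v :: "nat set \<Rightarrow> real" and a b c :: real
  assumes x: "is_PMAS {1..5} v x" and k: "k \<in> {4, 5}" and pos: "0 < a" "0 < b" "0 < c"
    and v12: "a \<le> v {1, 2}" and v23: "b \<le> v {2, 3}" and v3k: "c \<le> v {3, k}"
    and v123: "v {1, 2, 3} \<le> max a b" and v23k: "v {2, 3, k} \<le> max b c"
  shows "c < b \<and> c \<le> x {3, k} 3"
proof -
  note eff = is_PMAS_sum[OF x] and mono = is_PMAS_mono[OF x]
  have eff23k: "x {2, 3, k} 2 + x {2, 3, k} 3 + x {2, 3, k} k = v {2, 3, k}"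
    using eff[of "{2, 3, k}"] k by auto
  have "x {2, 3} 2 + x {3, k} 3 + x {3, k} k \<le> max b c"
    "x {2, 3} 2 + x {2, 3} 3 + x {3, k} k \<le> max b c"
    using eff23k v23k k mono[of "{2, 3}" "{2, 3, k}" 2] mono[of "{2, 3}" "{2, 3, k}" 3]
      mono[of "{3, k}" "{2, 3, k}" 3] mono[of "{3, k}" "{2, 3, k}" k] by auto
  moreover have "b \<le> x {2, 3} 2 + x {2, 3} 3" "c \<le> x {3, k} 3 + x {3, k} k"
    using eff[of "{2, 3}"] eff[of "{3, k}"] v23 v3k k by auto
  moreover have "a + x {2, 3} 3 \<le> max a b"
    using eff[of "{1, 2, 3}"] eff[of "{1, 2}"] v12 v123 mono[of "{1, 2}" "{1, 2, 3}" 1]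
      mono[of "{1, 2}" "{1, 2, 3}" 2] mono[of "{2, 3}" "{1, 2, 3}" 3] by simp
  ultimately show ?thesis
    using pos by (auto simp: max_def split: if_splits)
qed

lemma cobanner_game_not_population_monotonic:
  fixes v :: "nat set \<Rightarrow> real" and a b c d e :: real
  assumes pos: "0 < a" "0 < b" "0 < c" "0 < d" "0 < e"
    and v1: "0 \<le> v {1}"
    and v12: "a \<le> v {1, 2}" and v23: "b \<le> v {2, 3}" and v34: "c \<le> v {3, 4}"
    and v35: "d \<le> v {3, 5}" and v45: "e \<le> v {4, 5}"
    and v123: "v {1, 2, 3} \<le> max a b" and v234: "v {2, 3, 4} \<le> max b c"
    and v235: "v {2, 3, 5} \<le> max b d" and v1345: "v {1, 3, 4, 5} \<le> max c (max d e)"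
  shows "\<not> population_monotonic {1..5} v"
proof
  assume "population_monotonic {1..5} v"
  then obtain x where x: "is_PMAS {1..5} v x"
    unfolding population_monotonic_def by blast
  note eff = is_PMAS_sum[OF x] and mono = is_PMAS_mono[OF x]
  have "c \<le> x {3, 4} 3" "d \<le> x {3, 5} 3"
    using cobanner_PMAS_triangle_edge_share[OF x, of 4 a b c] pos v12 v23 v34 v123 v234
      cobanner_PMAS_triangle_edge_share[OF x, of 5 a b d] v35 v235 by auto
  then have "c \<le> x {1, 3, 4, 5} 3" "d \<le> x {1, 3, 4, 5} 3"
    using mono[of "{3, 4}" "{1, 3, 4, 5}" 3] mono[of "{3, 5}" "{1, 3, 4, 5}" 3] by auto
  moreover have "0 \<le> x {1, 3, 4, 5} 1"
    using eff[of "{1}"] v1 mono[of "{1}" "{1, 3, 4, 5}" 1] by simp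
  moreover have "e \<le> x {1, 3, 4, 5} 4 + x {1, 3, 4, 5} 5"
    using eff[of "{4, 5}"] v45 mono[of "{4, 5}" "{1, 3, 4, 5}" 4]
      mono[of "{4, 5}" "{1, 3, 4, 5}" 5] by simp
  moreover have
    "x {1, 3, 4, 5} 1 + x {1, 3, 4, 5} 3 + x {1, 3, 4, 5} 4 + x {1, 3, 4, 5} 5 = v {1, 3, 4, 5}"
    using eff[of "{1, 3, 4, 5}"] by simp
  ultimately show False
    using v1345 pos by (auto simp: max_def split: if_splits)
qed

lemma induced_cobanner_not_population_monotonic:
  assumes "simple_graph V E" "\<forall>e\<in>E. 0 < w e" "induced_embedding E cobanner_edges {1..5} f"
  shows "\<not> population_monotonic {1..5} (\<lambda>I. matching_game E w (f ` I))"
proof -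
  define v where "v = (\<lambda>I. matching_game E w (f ` I))"
  have edge: "{f i, f j} \<in> E" if "{i, j} \<in> cobanner_edges" for i j
    using induced_embedding_edge_image[OF assms(3) simple_graph_cobanner that] by simp
  have weight_pos: "0 < w {f i, f j}" if "{i, j} \<in> cobanner_edges" for i j
    using assms(2) edge[OF that] by blast
  have weight_le: "w {f i, f j} \<le> v I"
    if "{i, j} \<in> cobanner_edges" "{i, j} \<subseteq> I" "I \<subseteq> {1..5}" for i j I
    unfolding v_def using that edge[OF that(1)] finite_subset[of I "{1..5}"]
    by (intro matching_game_ge_weight) auto
  have value_le: "v I \<le> B"
    if "I \<subseteq> {1..5}" "0 \<le> B" "\<forall>p\<in>cobanner_edges. p \<subseteq> I \<longrightarrow> w (f ` p) \<le> B"
      "\<forall>p\<in>cobanner_edges. \<forall>q\<in>cobanner_edges. p \<subseteq> I \<longrightarrow> q \<subseteq> I \<longrightarrow> p \<inter> q \<noteq> {}" for I B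
    unfolding v_def using that finite_subset[of I "{1..5}"]
    by (intro matching_game_induced_le[OF assms(1,3)]) auto
  have "\<not> population_monotonic {1..5} v"
  proof (rule cobanner_game_not_population_monotonic)
    show pos: "0 < w {f 1, f 2}" "0 < w {f 2, f 3}" "0 < w {f 3, f 4}" "0 < w {f 3, f 5}"
      "0 < w {f 4, f 5}"
      by (simp_all add: weight_pos cobanner_edges_def)
    show "0 \<le> v {1}"
      unfolding v_def by (simp add: matching_game_nonneg)
    show "v {1, 2, 3} \<le> max (w {f 1, f 2}) (w {f 2, f 3})"
      "v {2, 3, 4} \<le> max (w {f 2, f 3}) (w {f 3, f 4})"
      "v {2, 3, 5} \<le> max (w {f 2, f 3}) (w {f 3, f 5})"
      "v {1, 3, 4, 5} \<le> max (w {f 3, f 4}) (max (w {f 3, f 5}) (w {f 4, f 5}))"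
      using pos by (auto intro!: value_le simp: cobanner_edges_def)
  qed (simp_all add: weight_le cobanner_edges_def)
  then show ?thesis
    unfolding v_def .
qed

theorem mainTheorem11:
  fixes V :: "'a set" and E :: "'a set set" and w :: "'a set \<Rightarrow> real"
  assumes "simple_graph V E"
    and "\<forall>e\<in>E. w e > 0"
    and "population_monotonic V (matching_game E w)"
  shows "\<not> has_induced_cobanner V E"
proof
  assume "has_induced_cobanner V E"
  then obtain f where emb: "induced_embedding E cobanner_edges {1..5} f" and "f ` {1..5} \<subseteq> V"
    unfolding has_induced_cobanner_iff by blast
  moreover have "inj_on f {1..5}"
    using emb unfolding induced_embedding_def by blast
  ultimately have "population_monotonic {1..5} (\<lambda>I. matching_game E w (f ` I))"
    using population_monotonic_restrict[OF assms(3)] by blast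
  with induced_cobanner_not_population_monotonic[OF assms(1,2) emb] show False
    by contradiction
qed

end
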